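(* Let $(X,d)$ be a compact metric space, $f:X\to X$ continuous, and $\mathcal A\subset\mathcal K(X)$ a nonempty set with the finite union property. Then $$\mathcal E(f_{\mathcal K},\mathcal A)\ge\lim_{\varepsilon\to0}\limsup_{n\to\infty}\frac{\log B(\mathcal A,n,\varepsilon)}{n}.$$
   Context: $\mathcal K(X)$ is the space of nonempty closed subsets of $X$, $f_{\mathcal K}(B)=f(B)$. $\mathcal A$ has the finite union property if $B\cup C\in\mathcal A$ for all $B,C\in\mathcal A$. $d_n(x,y)=\max_{0\le i\le n-1}d(f^ix,f^iy)$. $B,C$ are $(n,\varepsilon)$-split if $\min\{d_n(x,y):x\in B,y\in C\}>\varepsilon$; $B(\mathcal A,n,\varepsilon)$ is the maximal number of pairwise $(n,\varepsilon)$-split elements of $\mathcal A$. $A^\varepsilon_n=\{x:d_n(x,A)<\varepsilon\}$, $H^n(B,C)=\inf\{\varepsilon>0:B\subset C^\varepsilon_n,C\subset B^\varepsilon_n\}$; $N_{\mathcal K}(\mathcal Z,n,\varepsilon)$ is the smallest cardinality of $\mathcal G\subset\mathcal K(X)$ with each $B\in\mathcal Z$ within $H^n$-distance $\le\varepsilon$ of some element of $\mathcal G$; $\mathcal E(f_{\mathcal K},\mathcal Z)=\lim_{\varepsilon\to0}\limsup_n\frac{\log\log N_{\mathcal K}(\mathcal Z,n,\varepsilon)}{n}$ (convention $\log0=0$). *)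

theory Defs
  imports "HOL-Analysis.Analysis"
begin

definition lg :: "real \<Rightarrow> real" where
  "lg x = (if x \<le> 0 then 0 else ln x)"

definition Kspace :: "'a::metric_space set \<Rightarrow> 'a set set" where
  "Kspace X = {B. B \<subseteq> X \<and> B \<noteq> {} \<and> closed B}"

definition finite_union_property :: "'a set set \<Rightarrow> bool" where
  "finite_union_property \<A> \<longleftrightarrow> (\<forall>B\<in>\<A>. \<forall>C\<in>\<A>. B \<union> C \<in> \<A>)"

definition dn :: "('a::metric_space \<Rightarrow> 'a) \<Rightarrow> nat \<Rightarrow> 'a \<Rightarrow> 'a \<Rightarrow> real" where
  "dn f n x y = Max ((\<lambda>i. dist ((f ^^ i) x) ((f ^^ i) y)) ` {..<n})"

definition split_sets :: "('a::metric_space \<Rightarrow> 'a) \<Rightarrow> nat \<Rightarrow> real \<Rightarrow> 'a set \<Rightarrow> 'a set \<Rightarrow> bool" where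
  "split_sets f n \<epsilon> B C \<longleftrightarrow> Inf ((\<lambda>(x,y). dn f n x y) ` (B \<times> C)) > \<epsilon>"

definition Bnum :: "('a::metric_space \<Rightarrow> 'a) \<Rightarrow> 'a set set \<Rightarrow> nat \<Rightarrow> real \<Rightarrow> nat" where
  "Bnum f \<A> n \<epsilon> = Sup {card S | S. S \<subseteq> \<A> \<and> finite S \<and>
      (\<forall>B\<in>S. \<forall>C\<in>S. B \<noteq> C \<longrightarrow> split_sets f n \<epsilon> B C)}"

definition nbhd :: "('a::metric_space \<Rightarrow> 'a) \<Rightarrow> 'a set \<Rightarrow> nat \<Rightarrow> real \<Rightarrow> 'a set \<Rightarrow> 'a set" where
  "nbhd f X n \<epsilon> A = {x\<in>X. Inf ((\<lambda>a. dn f n x a) ` A) < \<epsilon>}"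

definition Hn :: "('a::metric_space \<Rightarrow> 'a) \<Rightarrow> 'a set \<Rightarrow> nat \<Rightarrow> 'a set \<Rightarrow> 'a set \<Rightarrow> real" where
  "Hn f X n B C = Inf {\<epsilon>. \<epsilon> > 0 \<and> B \<subseteq> nbhd f X n \<epsilon> C \<and> C \<subseteq> nbhd f X n \<epsilon> B}"

definition NK :: "('a::metric_space \<Rightarrow> 'a) \<Rightarrow> 'a set \<Rightarrow> 'a set set \<Rightarrow> nat \<Rightarrow> real \<Rightarrow> nat" where
  "NK f X \<Z> n \<epsilon> = Inf {card \<G> | \<G>. finite \<G> \<and> \<G> \<subseteq> Kspace X \<and>
      (\<forall>B\<in>\<Z>. \<exists>C\<in>\<G>. Hn f X n B C \<le> \<epsilon>)}"

definition Eent :: "('a::metric_space \<Rightarrow> 'a) \<Rightarrow> 'a set \<Rightarrow> 'a set set \<Rightarrow> ereal" where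
  "Eent f X \<Z> = Lim (at_right 0)
     (\<lambda>\<epsilon>. limsup (\<lambda>n. ereal (lg (lg (real (NK f X \<Z> n \<epsilon>))) / real n)))"

end

theory Submission
  imports Defs
begin

text \<open>Let S be a family of pairwise (n,3\<epsilon>)-split members of \<A>. By the finite union
  property, the unions of the 2^|S| - 1 nonempty subfamilies of S lie in \<A>, and no closed set
  can be H^n-within \<epsilon> of two different such unions: a point of a member B of one subfamily
  would be (n,3\<epsilon>)-close to a point of the other union, hence to a member of S other than B,
  which is split from B. So N_K(\<A>,n,\<epsilon>) \<ge> 2^B(\<A>,n,3\<epsilon>) - 1, i.e.
  log log N_K(\<A>,n,\<epsilon>) \<ge> log B(\<A>,n,3\<epsilon>) - 2. Both sides are monotone in \<epsilon>, so the
  inequality survives dividing by n, taking limsup in n, and letting \<epsilon> \<rightarrow> 0.\<close>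

section \<open>Bowen metric, H^n distance and finite unions\<close>

lemma funpow_image_subset: "f ` X \<subseteq> X \<Longrightarrow> (f ^^ i) ` X \<subseteq> X"
  by (induction i) (auto simp: image_subset_iff)

lemma continuous_on_funpow:
  assumes "continuous_on X f" "f ` X \<subseteq> X"
  shows "continuous_on X (f ^^ i)"
proof (induction i)
  case 0
  show ?case by (simp add: continuous_on_id)
next
  case (Suc i)
  have "continuous_on X (f \<circ> (f ^^ i))"
    using Suc continuous_on_subset[OF assms(1) funpow_image_subset[OF assms(2)]]
    by (rule continuous_on_compose)
  then show ?case by simp
qed

lemma dist_funpow_le_dn: "i < n \<Longrightarrow> dist ((f ^^ i) x) ((f ^^ i) y) \<le> dn f n x y"
  unfolding dn_def by (rule Max_ge) auto

lemma dn_less_iff: "0 < n \<Longrightarrow> dn f n x y < r \<longleftrightarrow> (\<forall>i<n. dist ((f ^^ i) x) ((f ^^ i) y) < r)"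
  unfolding dn_def by (subst Max_less_iff) auto

lemma dn_le_iff: "0 < n \<Longrightarrow> dn f n x y \<le> r \<longleftrightarrow> (\<forall>i<n. dist ((f ^^ i) x) ((f ^^ i) y) \<le> r)"
  unfolding dn_def by (subst Max_le_iff) auto

lemma dn_nonneg: "0 < n \<Longrightarrow> 0 \<le> dn f n x y"
  using dist_funpow_le_dn[of 0 n] zero_le_dist order_trans by blast

lemma dn_commute: "dn f n x y = dn f n y x"
  unfolding dn_def by (simp add: dist_commute)

lemma dn_triangle: "0 < n \<Longrightarrow> dn f n x z \<le> dn f n x y + dn f n y z"
  by (simp add: dn_le_iff) (meson add_mono dist_funpow_le_dn dist_triangle order_trans)

lemma split_sets_dn_less:
  assumes "0 < n" "split_sets f n e B C" "b \<in> B" "c \<in> C"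
  shows "e < dn f n b c"
proof -
  have "Inf ((\<lambda>(x, y). dn f n x y) ` (B \<times> C)) \<le> dn f n b c"
    by (rule cInf_lower) (use assms in \<open>auto intro!: bdd_belowI[of _ 0] dn_nonneg\<close>)
  then show ?thesis using assms(2) unfolding split_sets_def by linarith
qed

lemma Bnum_eq_Max:
  "Bnum f \<A> n e = Max {card S | S. S \<subseteq> \<A> \<and> finite S \<and> pairwise (split_sets f n e) S}"
proof -
  have "{card S | S. S \<subseteq> \<A> \<and> finite S \<and> pairwise (split_sets f n e) S} \<noteq> {}"
    by (auto intro!: exI[of _ "{}"])
  then show ?thesis unfolding Bnum_def pairwise_def Sup_nat_def by (rule if_not_P)
qed

lemma mem_nbhdI:
  assumes "0 < n" "x \<in> X" "c \<in> C" "dn f n x c < r"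
  shows "x \<in> nbhd f X n r C"
proof -
  have "Inf ((\<lambda>a. dn f n x a) ` C) \<le> dn f n x c"
    by (rule cInf_lower) (use assms in \<open>auto intro!: bdd_belowI[of _ 0] dn_nonneg\<close>)
  then show ?thesis using assms unfolding nbhd_def by auto
qed

lemma mem_nbhdE:
  assumes "x \<in> nbhd f X n r C" "C \<noteq> {}"
  obtains c where "c \<in> C" "dn f n x c < r"
  using assms cInf_lessD[of "(\<lambda>a. dn f n x a) ` C" r] unfolding nbhd_def by auto

lemma Hn_le:
  assumes "0 < r" "B \<subseteq> nbhd f X n r C" "C \<subseteq> nbhd f X n r B"
  shows "Hn f X n B C \<le> r"
  unfolding Hn_def by (rule cInf_lower) (use assms in \<open>auto intro!: bdd_belowI[of _ 0]\<close>)

lemma finite_union_property_Union: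
  assumes "finite_union_property \<A>" "finite I" "I \<noteq> {}" "I \<subseteq> \<A>"
  shows "\<Union>I \<in> \<A>"
  using assms(2-4)
proof (induction I rule: finite_ne_induct)
  case (insert B I)
  then show ?case using assms(1) unfolding finite_union_property_def by auto
qed simp

locale compact_system =
  fixes X :: "'a::metric_space set" and f :: "'a \<Rightarrow> 'a"
  assumes compact_X: "compact X" and continuous_f: "continuous_on X f" and f_into_X: "f ` X \<subseteq> X"
begin

lemma dn_finite_net:
  assumes "0 < n" "0 < r"
  obtains F where "finite F" "F \<subseteq> X" "\<And>x. x \<in> X \<Longrightarrow> \<exists>p\<in>F. dn f n x p < r"
proof -
  let ?close = "\<lambda>d i. \<forall>x\<in>X. \<forall>p\<in>X. dist x p < d \<longrightarrow> dist ((f ^^ i) x) ((f ^^ i) p) < r"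
  have "\<forall>\<^sub>F d in at_right 0. ?close d i" for i
  proof -
    have "uniformly_continuous_on X (f ^^ i)"
      using compact_uniformly_continuous continuous_on_funpow compact_X continuous_f f_into_X by blast
    then obtain d where "0 < d" "?close d i"
      unfolding uniformly_continuous_on_def using \<open>0 < r\<close> by blast
    then show ?thesis
      unfolding eventually_at_right_field by (intro exI[of _ d]) force
  qed
  then have "\<forall>\<^sub>F d in at_right 0. 0 < d \<and> (\<forall>i\<in>{..<n}. ?close d i)"
    by (intro eventually_conj eventually_at_right_less eventually_ball_finite) auto
  then obtain d where d: "0 < d" "\<And>i. i < n \<Longrightarrow> ?close d i"
    using eventually_happens'[OF trivial_limit_at_right_real] by blast
  obtain F where F: "F \<subseteq> X" "finite F" "X \<subseteq> (\<Union>p\<in>F. ball p d)"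
    by (rule compactE_image[OF compact_X, of X "\<lambda>p. ball p d"]) (use \<open>0 < d\<close> in auto)
  show thesis
  proof (rule that[OF F(2,1)])
    fix x assume "x \<in> X"
    then obtain p where "p \<in> F" "dist x p < d"
      using F(3) by (auto simp: dist_commute)
    moreover have "p \<in> X" using \<open>p \<in> F\<close> F(1) by blast
    ultimately have "dn f n x p < r"
      unfolding dn_less_iff[OF \<open>0 < n\<close>] using d(2) \<open>x \<in> X\<close> by blast
    then show "\<exists>p\<in>F. dn f n x p < r" using \<open>p \<in> F\<close> by blast
  qed
qed

lemma dn_bounded:
  assumes "0 < n"
  obtains M where "0 \<le> M" "\<And>x y. x \<in> X \<Longrightarrow> y \<in> X \<Longrightarrow> dn f n x y \<le> M"
proof -
  obtain M where M: "\<forall>x\<in>X. \<forall>y\<in>X. dist x y \<le> M"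
    using compact_imp_bounded[OF compact_X] bounded_two_points by blast
  have "dn f n x y \<le> max M 0" if "x \<in> X" "y \<in> X" for x y
    using M that funpow_image_subset[OF f_into_X] \<open>0 < n\<close>
    by (auto simp: dn_le_iff image_subset_iff intro: max.coboundedI1)
  then show thesis by (intro that[of "max M 0"]) auto
qed

lemma Hn_lessE:
  assumes "0 < n" "B \<subseteq> X" "C \<subseteq> X" "B \<noteq> {}" "C \<noteq> {}" "Hn f X n B C < r"
  obtains e where "e < r" "B \<subseteq> nbhd f X n e C" "C \<subseteq> nbhd f X n e B"
proof -
  obtain M where M: "0 \<le> M" "\<And>x y. x \<in> X \<Longrightarrow> y \<in> X \<Longrightarrow> dn f n x y \<le> M"
    using dn_bounded[OF \<open>0 < n\<close>] by blast
  have nbhd_M: "U \<subseteq> nbhd f X n (M + 1) V" if "U \<subseteq> X" "V \<subseteq> X" "V \<noteq> {}" for U V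
  proof
    fix x assume "x \<in> U"
    obtain v where "v \<in> V" using \<open>V \<noteq> {}\<close> by blast
    have "x \<in> X" "v \<in> X" using \<open>x \<in> U\<close> \<open>v \<in> V\<close> that by auto
    then show "x \<in> nbhd f X n (M + 1) V"
      using M(2)[of x v] \<open>v \<in> V\<close> by (intro mem_nbhdI[OF \<open>0 < n\<close>]) auto
  qed
  define E where "E = {e. 0 < e \<and> B \<subseteq> nbhd f X n e C \<and> C \<subseteq> nbhd f X n e B}"
  have "M + 1 \<in> E" unfolding E_def using assms M(1) nbhd_M by auto
  moreover have "Inf E < r" using assms(6) unfolding Hn_def E_def .
  ultimately obtain e where "e \<in> E" "e < r" using cInf_lessD by blast
  then show thesis using that unfolding E_def by blast
qed

text \<open>The slack from 2e to 3e absorbs the infimum in the definition of H^n.\<close>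
lemma Hn_common_approx:
  assumes "0 < n" "0 < e" "U \<subseteq> X" "V \<subseteq> X" "C \<subseteq> X" "U \<noteq> {}" "V \<noteq> {}" "C \<noteq> {}"
    and "Hn f X n U C \<le> e" "Hn f X n V C \<le> e" "x \<in> U"
  obtains y where "y \<in> V" "dn f n x y < 3 * e"
proof -
  have "Hn f X n U C < 3 * e / 2" "Hn f X n V C < 3 * e / 2" using assms(2,9,10) by auto
  obtain e1 where e1: "e1 < 3 * e / 2" "U \<subseteq> nbhd f X n e1 C"
    by (rule Hn_lessE[OF assms(1,3,5,6,8) \<open>Hn f X n U C < 3 * e / 2\<close>])
  obtain e2 where e2: "e2 < 3 * e / 2" "C \<subseteq> nbhd f X n e2 V"
    by (rule Hn_lessE[OF assms(1,4,5,7,8) \<open>Hn f X n V C < 3 * e / 2\<close>])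
  obtain c where c: "c \<in> C" "dn f n x c < e1"
    using e1(2) \<open>x \<in> U\<close> \<open>C \<noteq> {}\<close> by (blast elim: mem_nbhdE)
  obtain y where y: "y \<in> V" "dn f n c y < e2"
    using e2(2) c(1) \<open>V \<noteq> {}\<close> by (blast elim: mem_nbhdE)
  have "dn f n x y \<le> dn f n x c + dn f n c y" by (rule dn_triangle[OF \<open>0 < n\<close>])
  then show thesis using y c e1(1) e2(1) by (intro that[OF y(1)]) linarith
qed

lemma finite_Hn_net:
  assumes "0 < n" "0 < e"
  obtains G where "finite G" "G \<subseteq> Kspace X" "\<And>B. B \<in> Kspace X \<Longrightarrow> \<exists>C\<in>G. Hn f X n B C \<le> e"
proof -
  obtain F where F: "finite F" "F \<subseteq> X" "\<And>x. x \<in> X \<Longrightarrow> \<exists>p\<in>F. dn f n x p < e"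
    using dn_finite_net[OF assms] by blast
  show thesis
  proof (rule that[of "Pow F - {{}}"])
    show "finite (Pow F - {{}})" using F(1) by simp
    show "Pow F - {{}} \<subseteq> Kspace X"
      using F(1,2) by (auto simp: Kspace_def intro: finite_imp_closed finite_subset)
  next
    fix B assume "B \<in> Kspace X"
    then have B: "B \<subseteq> X" "B \<noteq> {}" by (auto simp: Kspace_def)
    define C where "C = {p \<in> F. \<exists>b\<in>B. dn f n b p < e}"
    have "C \<in> Pow F - {{}}" using F(3) B unfolding C_def by blast
    moreover have "Hn f X n B C \<le> e"
    proof (rule Hn_le[OF \<open>0 < e\<close>])
      show "B \<subseteq> nbhd f X n e C"
      proof
        fix b assume "b \<in> B"
        then obtain p where "p \<in> F" "dn f n b p < e" using F(3) B(1) by blast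
        then show "b \<in> nbhd f X n e C"
          using \<open>b \<in> B\<close> B(1) by (intro mem_nbhdI[OF \<open>0 < n\<close>]) (auto simp: C_def)
      qed
      show "C \<subseteq> nbhd f X n e B"
      proof
        fix p assume "p \<in> C"
        then obtain b where "b \<in> B" "dn f n p b < e" unfolding C_def by (auto simp: dn_commute)
        then show "p \<in> nbhd f X n e B"
          using \<open>p \<in> C\<close> F(2) by (intro mem_nbhdI[OF \<open>0 < n\<close>]) (auto simp: C_def)
      qed
    qed
    ultimately show "\<exists>C\<in>Pow F - {{}}. Hn f X n B C \<le> e" by blast
  qed
qed

lemma NK_attained:
  assumes "0 < n" "0 < e" "\<Z> \<subseteq> Kspace X"
  obtains G where "finite G" "G \<subseteq> Kspace X" "\<forall>B\<in>\<Z>. \<exists>C\<in>G. Hn f X n B C \<le> e"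
    "card G = NK f X \<Z> n e"
proof -
  let ?N = "{card \<G> | \<G>. finite \<G> \<and> \<G> \<subseteq> Kspace X \<and> (\<forall>B\<in>\<Z>. \<exists>C\<in>\<G>. Hn f X n B C \<le> e)}"
  obtain G where "finite G" "G \<subseteq> Kspace X" "\<And>B. B \<in> Kspace X \<Longrightarrow> \<exists>C\<in>G. Hn f X n B C \<le> e"
    using finite_Hn_net[OF assms(1,2)] by blast
  then have "?N \<noteq> {}" using assms(3) by blast
  then have "Inf ?N \<in> ?N" by (rule Inf_nat_def1)
  then show thesis using that unfolding NK_def by auto
qed

lemma NK_antimono:
  assumes "0 < n" "0 < e" "e \<le> e'" "\<Z> \<subseteq> Kspace X"
  shows "NK f X \<Z> n e' \<le> NK f X \<Z> n e"
proof -
  obtain G where G: "finite G" "G \<subseteq> Kspace X" "\<forall>B\<in>\<Z>. \<exists>C\<in>G. Hn f X n B C \<le> e"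
    "card G = NK f X \<Z> n e"
    by (rule NK_attained[OF assms(1,2,4)])
  then have "\<forall>B\<in>\<Z>. \<exists>C\<in>G. Hn f X n B C \<le> e'" using assms(3) by force
  then have "NK f X \<Z> n e' \<le> card G" unfolding NK_def using G(1,2) by (intro cInf_lower) auto
  then show ?thesis using G(4) by simp
qed

text \<open>Distinct members of an (n,e)-split family have points (n,e/2)-close to distinct points
  of an (n,e/2)-net.\<close>
lemma card_split_family_bounded:
  assumes "0 < n" "0 < e"
  obtains K where "\<And>S. S \<subseteq> Kspace X \<Longrightarrow> pairwise (split_sets f n e) S \<Longrightarrow> card S \<le> K"
proof -
  obtain F where F: "finite F" "F \<subseteq> X" "\<And>x. x \<in> X \<Longrightarrow> \<exists>p\<in>F. dn f n x p < e / 2"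
    using dn_finite_net[OF assms(1), of "e / 2"] assms(2) by auto
  have "card S \<le> card F" if S: "S \<subseteq> Kspace X" "pairwise (split_sets f n e) S" for S
  proof -
    have "\<forall>B\<in>S. \<exists>p\<in>F. \<exists>b\<in>B. dn f n b p < e / 2"
      using S(1) F(3) by (fastforce simp: Kspace_def)
    then obtain p where p: "\<And>B. B \<in> S \<Longrightarrow> p B \<in> F \<and> (\<exists>b\<in>B. dn f n b (p B) < e / 2)"
      by metis
    have "inj_on p S"
    proof (rule inj_onI, rule ccontr)
      fix B C assume "B \<in> S" "C \<in> S" "p B = p C" "B \<noteq> C"
      then obtain b c where "b \<in> B" "c \<in> C" "dn f n b (p B) < e / 2" "dn f n c (p B) < e / 2"
        using p by metis
      have "split_sets f n e B C" using S(2) \<open>B \<in> S\<close> \<open>C \<in> S\<close> \<open>B \<noteq> C\<close> by (rule pairwiseD)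
      then have "e < dn f n b c" using \<open>b \<in> B\<close> \<open>c \<in> C\<close> by (rule split_sets_dn_less[OF assms(1)])
      moreover have "dn f n b c \<le> dn f n b (p B) + dn f n (p B) c" by (rule dn_triangle[OF assms(1)])
      ultimately show False
        using \<open>dn f n b (p B) < e / 2\<close> \<open>dn f n c (p B) < e / 2\<close> dn_commute[of f n c "p B"] by linarith
    qed
    then show ?thesis using p F(1) by (intro card_inj_on_le) auto
  qed
  then show thesis by (rule that)
qed

lemma finite_split_family_cards:
  assumes "0 < n" "0 < e" "\<A> \<subseteq> Kspace X"
  shows "finite {card S | S. S \<subseteq> \<A> \<and> finite S \<and> pairwise (split_sets f n e) S}"
proof -
  obtain K where "\<And>S. S \<subseteq> Kspace X \<Longrightarrow> pairwise (split_sets f n e) S \<Longrightarrow> card S \<le> K"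
    using card_split_family_bounded[OF assms(1,2)] by blast
  then have "{card S | S. S \<subseteq> \<A> \<and> finite S \<and> pairwise (split_sets f n e) S} \<subseteq> {..K}"
    using assms(3) by fastforce
  then show ?thesis by (rule finite_subset) simp
qed

lemma Bnum_attained:
  assumes "0 < n" "0 < e" "\<A> \<subseteq> Kspace X"
  obtains S where "S \<subseteq> \<A>" "finite S" "pairwise (split_sets f n e) S" "card S = Bnum f \<A> n e"
proof -
  let ?N = "{card S | S. S \<subseteq> \<A> \<and> finite S \<and> pairwise (split_sets f n e) S}"
  have "?N \<noteq> {}" by (auto intro!: exI[of _ "{}"])
  with finite_split_family_cards[OF assms] have "Max ?N \<in> ?N" by (rule Max_in)
  then obtain S where "S \<subseteq> \<A>" "finite S" "pairwise (split_sets f n e) S" "card S = Max ?N"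
    by auto
  then show thesis by (intro that) (simp_all add: Bnum_eq_Max)
qed

lemma card_le_Bnum:
  assumes "0 < n" "0 < e" "\<A> \<subseteq> Kspace X"
    and "S \<subseteq> \<A>" "finite S" "pairwise (split_sets f n e) S"
  shows "card S \<le> Bnum f \<A> n e"
  unfolding Bnum_eq_Max using finite_split_family_cards[OF assms(1-3)]
  by (rule Max_ge) (use assms(4-6) in blast)

lemma Bnum_antimono:
  assumes "0 < n" "0 < e" "e \<le> e'" "\<A> \<subseteq> Kspace X"
  shows "Bnum f \<A> n e' \<le> Bnum f \<A> n e"
proof -
  obtain S where S: "S \<subseteq> \<A>" "finite S" "pairwise (split_sets f n e') S" "card S = Bnum f \<A> n e'"
    using Bnum_attained[OF assms(1) _ assms(4)] assms(2,3) by (metis order_less_le_trans)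
  have "pairwise (split_sets f n e) S"
    using S(3) by (rule pairwise_mono) (use assms(3) in \<open>auto simp: split_sets_def\<close>)
  then show ?thesis using card_le_Bnum[OF assms(1,2,4) S(1,2)] S(4) by simp
qed

lemma subfamily_determined_by_approximant:
  assumes "0 < n" "0 < e" "S \<subseteq> Kspace X" "pairwise (split_sets f n (3 * e)) S"
    and "I \<subseteq> S" "J \<subseteq> S" "I \<noteq> {}" "J \<noteq> {}" "C \<in> Kspace X"
    and "Hn f X n (\<Union>I) C \<le> e" "Hn f X n (\<Union>J) C \<le> e"
  shows "I \<subseteq> J"
proof
  fix B assume "B \<in> I"
  have SX: "A \<subseteq> X" and SNE: "A \<noteq> {}" if "A \<in> S" for A
    using that assms(3) by (auto simp: Kspace_def)
  have CX: "C \<subseteq> X" "C \<noteq> {}" using assms(9) by (auto simp: Kspace_def)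
  have unions_X: "\<Union>I \<subseteq> X" "\<Union>J \<subseteq> X" using SX assms(5,6) by blast+
  have unions_ne: "\<Union>I \<noteq> {}" "\<Union>J \<noteq> {}" using SNE assms(5-8) by blast+
  obtain x where "x \<in> B" using SNE \<open>B \<in> I\<close> assms(5) by blast
  then obtain y where "y \<in> \<Union>J" "dn f n x y < 3 * e"
    using Hn_common_approx[OF assms(1,2) unions_X CX(1) unions_ne CX(2) assms(10,11)] \<open>B \<in> I\<close>
    by blast
  then obtain B' where "B' \<in> J" "y \<in> B'" by blast
  have "B' = B"
  proof (rule ccontr)
    assume "B' \<noteq> B"
    then have "split_sets f n (3 * e) B B'"
      using assms(4-6) \<open>B \<in> I\<close> \<open>B' \<in> J\<close> by (auto intro: pairwiseD)
    then have "3 * e < dn f n x y" using \<open>x \<in> B\<close> \<open>y \<in> B'\<close> by (rule split_sets_dn_less[OF assms(1)])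
    then show False using \<open>dn f n x y < 3 * e\<close> by simp
  qed
  then show "B \<in> J" using \<open>B' \<in> J\<close> by simp
qed

lemma card_split_family_le_NK:
  assumes "0 < n" "0 < e" "\<A> \<subseteq> Kspace X" "finite_union_property \<A>"
    and "S \<subseteq> \<A>" "finite S" "pairwise (split_sets f n (3 * e)) S"
  shows "2 ^ card S - 1 \<le> NK f X \<A> n e"
proof -
  obtain G where G: "finite G" "G \<subseteq> Kspace X" "\<forall>B\<in>\<A>. \<exists>C\<in>G. Hn f X n B C \<le> e"
    "card G = NK f X \<A> n e"
    by (rule NK_attained[OF assms(1-3)])
  let ?P = "Pow S - {{}}"
  have "\<Union>I \<in> \<A>" if "I \<in> ?P" for I
    using that assms(5,6) by (intro finite_union_property_Union[OF assms(4)]) (auto intro: finite_subset)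
  then have "\<forall>I\<in>?P. \<exists>C\<in>G. Hn f X n (\<Union>I) C \<le> e" using G(3) by blast
  then obtain c where c: "\<And>I. I \<in> ?P \<Longrightarrow> c I \<in> G \<and> Hn f X n (\<Union>I) (c I) \<le> e"
    by metis
  have "inj_on c ?P"
  proof (rule inj_onI)
    fix I J assume IJ: "I \<in> ?P" "J \<in> ?P" "c I = c J"
    have "S \<subseteq> Kspace X" using assms(3,5) by blast
    moreover have "c I \<in> Kspace X" using c[OF IJ(1)] G(2) by blast
    moreover have "Hn f X n (\<Union>I) (c I) \<le> e" "Hn f X n (\<Union>J) (c I) \<le> e"
      using c[OF IJ(1)] c[OF IJ(2)] IJ(3) by simp_all
    moreover have "I \<subseteq> S" "J \<subseteq> S" "I \<noteq> {}" "J \<noteq> {}" using IJ(1,2) by auto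
    ultimately show "I = J"
      using subfamily_determined_by_approximant[OF assms(1,2) _ assms(7)] by (meson subset_antisym)
  qed
  then have "card ?P \<le> card G" by (rule card_inj_on_le) (use c G(1) in auto)
  then show ?thesis using G(4) assms(6) by (simp add: card_Diff_singleton card_Pow)
qed

lemma two_pow_Bnum_le_NK:
  assumes "0 < n" "0 < e" "\<A> \<subseteq> Kspace X" "finite_union_property \<A>"
  shows "2 ^ Bnum f \<A> n (3 * e) - 1 \<le> NK f X \<A> n e"
proof -
  have "0 < 3 * e" using assms(2) by simp
  then obtain S where "S \<subseteq> \<A>" "finite S" "pairwise (split_sets f n (3 * e)) S"
    "card S = Bnum f \<A> n (3 * e)"
    by (rule Bnum_attained[OF assms(1) _ assms(3)])
  with card_split_family_le_NK[OF assms] show ?thesis by metis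
qed

end

section \<open>Logarithms and limits\<close>

lemma lg_of_nat_mono: "M \<le> N \<Longrightarrow> lg (real M) \<le> lg (real N)"
  unfolding lg_def by auto

lemma ln_ge_minus_one: "1 / 2 \<le> y \<Longrightarrow> -1 \<le> ln (y :: real)"
proof -
  assume "1 / 2 \<le> y"
  have "2 \<le> exp (1 :: real)" using exp_ge_add_one_self[of 1] by simp
  then have "1 / 2 * 2 \<le> y * exp 1" using \<open>1 / 2 \<le> y\<close> by (intro mult_mono) auto
  then have "exp (-1) \<le> y" by (simp add: exp_minus field_simps)
  then show ?thesis using \<open>1 / 2 \<le> y\<close> by (subst ln_ge_iff) auto
qed

lemma lg_lg_of_nat_ge: "-1 \<le> lg (lg (real N))"
proof (cases "2 \<le> N")
  case True
  then have "ln 2 \<le> ln (real N)" by simp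
  then have "1 / 2 \<le> ln (real N)" using ln2_ge_two_thirds by linarith
  then show ?thesis using True ln_ge_minus_one by (simp add: lg_def)
next
  case False
  then have "N = 0 \<or> N = 1" by auto
  then show ?thesis by (auto simp: lg_def)
qed

text \<open>The slack 1 is needed because lg (lg 1) = 0 exceeds lg (lg 2) = ln (ln 2).\<close>
lemma lg_lg_of_nat_mono: "M \<le> N \<Longrightarrow> lg (lg (real M)) \<le> lg (lg (real N)) + 1"
proof (cases "2 \<le> M")
  case True
  moreover assume "M \<le> N"
  ultimately have "lg (lg (real M)) \<le> lg (lg (real N))" by (simp add: lg_def)
  then show ?thesis by simp
next
  case False
  then have "M = 0 \<or> M = 1" by auto
  then show ?thesis using lg_lg_of_nat_ge[of N] by (auto simp: lg_def)
qed

lemma lg_le_lg_lg_two_pow: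
  assumes "2 ^ m - 1 \<le> N"
  shows "lg (real m) \<le> lg (lg (real N)) + 2"
proof (cases "2 \<le> m")
  case True
  have "(2::nat) ^ (m - 1) \<le> 2 ^ m - 1" using True by (cases m) auto
  then have N_ge: "(2::real) ^ (m - 1) \<le> real N"
    using assms by (metis numeral_power_le_of_nat_cancel_iff order_trans)
  have "(2::real) \<le> 2 ^ (m - 1)" using True by (intro self_le_power) auto
  with N_ge have "1 < real N" by linarith
  have "real m / 3 \<le> real (m - 1) * (2 / 3)" using True by (simp add: of_nat_diff)
  also have "\<dots> \<le> real (m - 1) * ln 2" using ln2_ge_two_thirds by (intro mult_left_mono) auto
  also have "\<dots> = ln ((2::real) ^ (m - 1))" by (simp add: ln_realpow)
  also have "\<dots> \<le> ln (real N)" using N_ge by (intro ln_mono) auto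
  finally have "ln (real m / 3) \<le> ln (ln (real N))" using True by (intro ln_mono) auto
  moreover have "ln (real m / 3) = ln (real m) - ln 3" using True by (simp add: ln_div)
  moreover have "ln (3 :: real) \<le> 2" using ln_le_minus_one[of 3] by simp
  ultimately show ?thesis using True \<open>1 < real N\<close> by (simp add: lg_def)
next
  case False
  then have "m = 0 \<or> m = 1" by auto
  then show ?thesis using lg_lg_of_nat_ge[of N] by (auto simp: lg_def)
qed

lemma limsup_div_n_le:
  fixes a b :: "nat \<Rightarrow> real"
  assumes "\<And>n. 0 < n \<Longrightarrow> a n \<le> b n + c"
  shows "limsup (\<lambda>n. ereal (a n / real n)) \<le> limsup (\<lambda>n. ereal (b n / real n))"
proof -
  have "ereal (a n / real n) \<le> ereal (b n / real n) + ereal (c / real n)" for n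
    using assms[of n] by (cases "n = 0") (simp_all add: add_divide_distrib[symmetric] divide_right_mono)
  then have "limsup (\<lambda>n. ereal (a n / real n)) \<le> limsup (\<lambda>n. ereal (b n / real n) + ereal (c / real n))"
    by (intro Limsup_mono) simp
  also have "\<dots> \<le> limsup (\<lambda>n. ereal (b n / real n)) + limsup (\<lambda>n. ereal (c / real n))"
    by (rule ereal_limsup_add_mono)
  also have "limsup (\<lambda>n. ereal (c / real n)) = 0"
    using lim_imp_Limsup[OF trivial_limit_sequentially tendsto_ereal[OF lim_const_over_n]]
    by (simp add: zero_ereal_def)
  finally show ?thesis by simp
qed

lemma Lim_at_right_0_antimono:
  fixes F :: "real \<Rightarrow> ereal"
  assumes "\<And>x y. 0 < x \<Longrightarrow> x \<le> y \<Longrightarrow> F y \<le> F x"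
  shows "Lim (at_right 0) F = (SUP x\<in>{0<..}. F x)"
proof (rule tendsto_Lim[OF trivial_limit_at_right_real], rule order_tendstoI)
  fix a assume "a < (SUP x\<in>{0<..}. F x)"
  then obtain x where "0 < x" "a < F x" by (auto simp: less_SUP_iff)
  then have "\<forall>y. 0 < y \<longrightarrow> y < x \<longrightarrow> a < F y"
    using assms by (meson less_imp_le order_less_le_trans)
  then show "\<forall>\<^sub>F y in at_right 0. a < F y"
    unfolding eventually_at_right_field using \<open>0 < x\<close> by blast
next
  fix a assume "(SUP x\<in>{0<..}. F x) < a"
  then have "\<forall>y. 0 < y \<longrightarrow> F y < a"
    by (metis SUP_upper greaterThan_iff order_le_less_trans)
  then show "\<forall>\<^sub>F y in at_right 0. F y < a"
    unfolding eventually_at_right_field by (intro exI[of _ 1]) simp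
qed

lemma Lim_at_right_0_le_rescaled:
  fixes g h :: "real \<Rightarrow> ereal"
  assumes "\<And>x y. 0 < x \<Longrightarrow> x \<le> y \<Longrightarrow> g y \<le> g x" "\<And>x y. 0 < x \<Longrightarrow> x \<le> y \<Longrightarrow> h y \<le> h x"
    and "0 < c" "\<And>x. 0 < x \<Longrightarrow> h (c * x) \<le> g x"
  shows "Lim (at_right 0) h \<le> Lim (at_right 0) g"
proof -
  have "h x \<le> (SUP x\<in>{0<..}. g x)" if "0 < x" for x
  proof -
    have "h x = h (c * (x / c))" using assms(3) by simp
    also have "\<dots> \<le> g (x / c)" by (rule assms(4)) (use assms(3) that in simp)
    also have "\<dots> \<le> (SUP x\<in>{0<..}. g x)" using assms(3) that by (intro SUP_upper) simp
    finally show ?thesis .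
  qed
  then have "(SUP x\<in>{0<..}. h x) \<le> (SUP x\<in>{0<..}. g x)" by (intro SUP_least) simp
  then show ?thesis by (simp only: Lim_at_right_0_antimono assms(1,2))
qed

theorem lemma4p4:
  fixes X :: "'a::metric_space set" and f :: "'a \<Rightarrow> 'a" and \<A> :: "'a set set"
  assumes "compact X"
    and "continuous_on X f" and "f ` X \<subseteq> X"
    and "\<A> \<subseteq> Kspace X" and "\<A> \<noteq> {}"
    and "finite_union_property \<A>"
  shows "Eent f X \<A> \<ge> Lim (at_right 0)
     (\<lambda>\<epsilon>. limsup (\<lambda>n. ereal (lg (real (Bnum f \<A> n \<epsilon>)) / real n)))"
proof -
  interpret compact_system X f using assms(1-3) by unfold_locales
  show ?thesis
    unfolding Eent_def
  proof (rule Lim_at_right_0_le_rescaled[where c = 3])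
    fix x y :: real assume "0 < x" "x \<le> y"
    show "limsup (\<lambda>n. ereal (lg (lg (real (NK f X \<A> n y))) / real n))
        \<le> limsup (\<lambda>n. ereal (lg (lg (real (NK f X \<A> n x))) / real n))"
      by (rule limsup_div_n_le[where c = 1]) (intro lg_lg_of_nat_mono NK_antimono \<open>0 < x\<close> \<open>x \<le> y\<close> assms(4))
  next
    fix x y :: real assume "0 < x" "x \<le> y"
    show "limsup (\<lambda>n. ereal (lg (real (Bnum f \<A> n y)) / real n))
        \<le> limsup (\<lambda>n. ereal (lg (real (Bnum f \<A> n x)) / real n))"
      by (rule limsup_div_n_le[where c = 0])
        (simp add: lg_of_nat_mono Bnum_antimono \<open>0 < x\<close> \<open>x \<le> y\<close> assms(4))
  next
    fix x :: real assume "0 < x"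
    show "limsup (\<lambda>n. ereal (lg (real (Bnum f \<A> n (3 * x))) / real n))
        \<le> limsup (\<lambda>n. ereal (lg (lg (real (NK f X \<A> n x))) / real n))"
      by (rule limsup_div_n_le[where c = 2]) (intro lg_le_lg_lg_two_pow two_pow_Bnum_le_NK \<open>0 < x\<close> assms(4,6))
  qed simp
qed

end
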